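(* Let $X$ be a multiset of nonzero real numbers containing at least one positive and one negative number, and let $T$ be an addition tree over $X$. Let $y_1,\dots,y_{2k}$ be the critical leaves of $T$, indexed so that $y_{2i-1}$ and $y_{2i}$ are siblings, and let $z_1,\dots,z_{n-2k}$ be the noncritical leaves. Let $\Pi=\sum_{i=1}^k|y_{2i-1}+y_{2i}|$ and $\Delta=\sum_{j=1}^{n-2k}|z_j|$. Then $C(T)\ge(\Pi+\Delta)/2$.
   Context: An addition tree over a multiset $X=\{x_1,\dots,x_n\}$ is a full binary tree with $n$ leaves labeled by the elements of $X$ (each used once), each internal node having value equal to the sum of its children's values; $C(T)$ is the sum of the absolute values of the internal node values. A leaf is critical if its sibling is a leaf of the opposite sign (so critical leaves come in sibling pairs). *)

theory Defs
  imports Complex_Main "HOL-Library.Multiset"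
begin

datatype atree = Leaf real | Node atree atree

fun leaves :: "atree \<Rightarrow> real multiset" where
  "leaves (Leaf x) = {#x#}"
| "leaves (Node l r) = leaves l + leaves r"

fun tval :: "atree \<Rightarrow> real" where
  "tval (Leaf x) = x"
| "tval (Node l r) = tval l + tval r"

fun cost :: "atree \<Rightarrow> real" where
  "cost (Leaf x) = 0"
| "cost (Node l r) = \<bar>tval l + tval r\<bar> + cost l + cost r"

(* A node whose two children are leaves of opposite sign: its two leaves are critical *)
fun crit_pair :: "atree \<Rightarrow> bool" where
  "crit_pair (Node (Leaf a) (Leaf b)) = ((a > 0 \<and> b < 0) \<or> (a < 0 \<and> b > 0))"
| "crit_pair _ = False"

fun Pi_sum :: "atree \<Rightarrow> real" where
  "Pi_sum (Leaf x) = 0"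
| "Pi_sum (Node l r) =
     (if crit_pair (Node l r) then \<bar>tval l + tval r\<bar> else Pi_sum l + Pi_sum r)"

fun Delta_sum :: "atree \<Rightarrow> real" where
  "Delta_sum (Leaf x) = \<bar>x\<bar>"
| "Delta_sum (Node l r) = (if crit_pair (Node l r) then 0 else Delta_sum l + Delta_sum r)"

end

theory Submission
  imports Defs
begin

text \<open>Every internal node satisfies the stronger invariant
  \<open>\<Pi>(T) + \<Delta>(T) + \<bar>val T\<bar> \<le> 2 C(T)\<close>, while a leaf satisfies
  \<open>\<Pi>(u) + \<Delta>(u) = \<bar>val u\<bar>\<close>. A critical pair attains the invariant with equality, and two
  leaves of the same sign give \<open>\<bar>a\<bar> + \<bar>b\<bar> = \<bar>a + b\<bar>\<close>. If a child \<open>s\<close> is an internal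
  node, the surplus \<open>\<bar>val s\<bar>\<close> it carries pays for its sibling \<open>u\<close>, since
  \<open>\<bar>val u\<bar> \<le> \<bar>val s\<bar> + \<bar>val s + val u\<bar>\<close>. The mixed signs in \<open>X\<close> rule out a single-leaf
  tree.\<close>

lemma Pi_Delta_abs_le_cost_two_leaves:
  "Pi_sum (Node (Leaf a) (Leaf b)) + Delta_sum (Node (Leaf a) (Leaf b)) + \<bar>a + b\<bar>
     \<le> 2 * cost (Node (Leaf a) (Leaf b))"
  by (auto simp: abs_if)

lemma Pi_Delta_abs_le_cost_inner_child:
  assumes strong: "Pi_sum s + Delta_sum s + \<bar>tval s\<bar> \<le> 2 * cost s"
    and weak: "Pi_sum u + Delta_sum u \<le> 2 * cost u + \<bar>tval u\<bar>"
    and t: "t = Node s u \<or> t = Node u s"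
    and s: "s = Node s1 s2"
  shows "Pi_sum t + Delta_sum t + \<bar>tval t\<bar> \<le> 2 * cost t"
proof -
  have "\<not> crit_pair t"
    using t s by auto
  moreover have "\<bar>tval u\<bar> \<le> \<bar>tval s\<bar> + \<bar>tval s + tval u\<bar>"
    by linarith
  ultimately show ?thesis
    using t strong weak by auto
qed

lemma Pi_Delta_abs_le_cost:
  assumes "t = Node l r"
  shows "Pi_sum t + Delta_sum t + \<bar>tval t\<bar> \<le> 2 * cost t"
  using assms
proof (induction t arbitrary: l r)
  case (Leaf x)
  then show ?case by simp
next
  case (Node t1 t2)
  have weak: "Pi_sum s + Delta_sum s \<le> 2 * cost s + \<bar>tval s\<bar>" if "s \<in> {t1, t2}" for s
  proof (cases s)
    case (Node s1 s2)
    then have "Pi_sum s + Delta_sum s + \<bar>tval s\<bar> \<le> 2 * cost s"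
      using that Node.IH by blast
    then show ?thesis by linarith
  qed simp
  consider (two_leaves) a b where "t1 = Leaf a" "t2 = Leaf b"
    | (left_Node) l1 l2 where "t1 = Node l1 l2"
    | (right_Node) r1 r2 where "t2 = Node r1 r2"
    by (meson atree.exhaust)
  then show ?case
  proof cases
    case two_leaves
    then show ?thesis
      using Pi_Delta_abs_le_cost_two_leaves by simp
  next
    case left_Node
    then show ?thesis
      using Pi_Delta_abs_le_cost_inner_child[of t1 t2] Node.IH(1) weak by blast
  next
    case right_Node
    then show ?thesis
      using Pi_Delta_abs_le_cost_inner_child[of t2 t1] Node.IH(2) weak by blast
  qed
qed

theorem lemma3p1:
  fixes X :: "real multiset" and T :: atree
  assumes "\<forall>x\<in>#X. x \<noteq> 0"
    and "\<exists>x\<in>#X. x > 0" and "\<exists>x\<in>#X. x < 0"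
    and "leaves T = X"
  shows "cost T \<ge> (Pi_sum T + Delta_sum T) / 2"
proof (cases T)
  case (Leaf x)
  then show ?thesis using assms(2-4) by auto
next
  case (Node l r)
  then have "Pi_sum T + Delta_sum T + \<bar>tval T\<bar> \<le> 2 * cost T"
    by (rule Pi_Delta_abs_le_cost)
  then show ?thesis by simp
qed

end
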